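(* For every integer $n$, \[ \sum_{k=1}^n L_k^{\,4}=5F_{2n+1}F_{n-1}F_{n+2}+6n-5\,. \]
   Context: $F_i$ and $L_i$ denote the Fibonacci and Lucas numbers, defined for all $i\in\mathbb{Z}$ by $F_i=F_{i-1}+F_{i-2}$, $F_0=0$, $F_1=1$, and $L_i=L_{i-1}+L_{i-2}$, $L_0=2$, $L_1=1$; equivalently $F_{-i}=(-1)^{i-1}F_i$ and $L_{-i}=(-1)^iL_i$. Summation convention for an arbitrary integer upper limit: $\sum_{k=a}^{a-1} f(k)=0$, and for $n<a-1$, $\sum_{k=a}^{n} f(k) = -\sum_{k=n+1}^{a-1} f(k)$. *)

theory Defs
  imports Main
begin

fun fibn :: "nat \<Rightarrow> int" where
  "fibn 0 = 0"
| "fibn (Suc 0) = 1"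
| "fibn (Suc (Suc n)) = fibn (Suc n) + fibn n"

fun lucn :: "nat \<Rightarrow> int" where
  "lucn 0 = 2"
| "lucn (Suc 0) = 1"
| "lucn (Suc (Suc n)) = lucn (Suc n) + lucn n"

definition F :: "int \<Rightarrow> int" where
  "F i = (if i \<ge> 0 then fibn (nat i) else (-1) ^ (nat (-i) + 1) * fibn (nat (-i)))"

definition L :: "int \<Rightarrow> int" where
  "L i = (if i \<ge> 0 then lucn (nat i) else (-1) ^ nat (-i) * lucn (nat (-i)))"

text \<open>Summation with arbitrary integer upper limit:
  sum_{k=a}^{n} f k = usual sum if n >= a-1, and = - sum_{k=n+1}^{a-1} f k if n < a-1.\<close>
definition gsum :: "(int \<Rightarrow> int) \<Rightarrow> int \<Rightarrow> int \<Rightarrow> int" where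
  "gsum f a n = (if n \<ge> a - 1 then (\<Sum>k\<in>{a..n}. f k) else - (\<Sum>k\<in>{n+1..a-1}. f k))"

end

theory Submission
  imports Defs
begin

text \<open>Both sides satisfy the same first-order difference equation in \<open>n\<close> and agree at \<open>n = 0\<close>.
  Writing \<open>a = F n\<close>, \<open>b = F (n+1)\<close>, every Fibonacci and Lucas number in the increment of the
  right-hand side is a polynomial in \<open>a, b\<close>, and the increment minus \<open>L n ^ 4\<close> reduces to
  \<open>6 - 6 (b\<^sup>2 - a b - a\<^sup>2)\<^sup>2\<close>, which vanishes by Cassini's identity.\<close>

lemma shift_invariant_const:
  fixes C :: "int \<Rightarrow> 'a"
  assumes "\<And>i. C (i + 1) = C i"
  shows "C n = C 0"
proof (induction n rule: int_induct[where k = 0])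
  case (step2 i)
  then show ?case using assms[of "i - 1"] by simp
qed (use assms in simp_all)

lemma gsum_diff_pred: "gsum f a n - gsum f a (n - 1) = f n"
proof -
  consider "n \<ge> a" | "n = a - 1" | "n < a - 1" by linarith
  then show ?thesis
  proof cases
    case 1
    then have "{a..n} = insert n {a..n - 1}" by auto
    with 1 show ?thesis by (simp add: gsum_def)
  next
    case 3
    then have "{n..a - 1} = insert n {n + 1..a - 1}" by auto
    with 3 show ?thesis by (simp add: gsum_def)
  qed (simp add: gsum_def)
qed

definition fib_like :: "(int \<Rightarrow> int) \<Rightarrow> bool" where
  "fib_like g \<longleftrightarrow> (\<forall>i. g (i + 2) = g (i + 1) + g i)"

lemma fib_like_eqI:
  assumes g: "fib_like g" and h: "fib_like h" and "g 0 = h 0" "g 1 = h 1"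
  shows "g n = h n"
proof -
  have "g n = h n \<and> g (n + 1) = h (n + 1)"
  proof (induction n rule: int_induct[where k = 0])
    case base
    then show ?case using assms(3,4) by simp
  next
    case (step1 i)
    then show ?case using g h unfolding fib_like_def by (metis add.assoc one_add_one)
  next
    case (step2 i)
    then show ?case using g h unfolding fib_like_def
      by (metis add.commute add_diff_cancel_left' diff_add_cancel one_add_one add.assoc)
  qed
  then show ?thesis ..
qed

lemma int_cases_neg3:
  fixes i :: int
  obtains "i \<ge> 0" | "i = -1" | "i = -2" | j :: nat where "i = - int j - 3"
proof -
  have "i \<ge> 0 \<or> i = -1 \<or> i = -2 \<or> i = - int (nat (- i - 3)) - 3" by auto
  then show ?thesis using that by blast
qed

lemma F_fib_like: "fib_like F"
  unfolding fib_like_def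
proof
  fix i :: int
  show "F (i + 2) = F (i + 1) + F i"
  proof (cases i rule: int_cases_neg3)
    case 1
    then obtain m where "i = int m" by (metis nonneg_eq_int)
    then show ?thesis by (simp add: F_def nat_add_distrib)
  next
    case (4 j)
    have "F (i + 2) = (-1) ^ j * fibn (Suc j)"
      "F (i + 1) = (-1) ^ (j + 1) * fibn (Suc (Suc j))"
      "F i = (-1) ^ j * fibn (Suc (Suc (Suc j)))"
      by (simp_all add: F_def 4 nat_add_distrib numeral_eq_Suc)
    then show ?thesis by (simp add: algebra_simps)
  qed (simp_all add: F_def numeral_eq_Suc)
qed

lemma L_fib_like: "fib_like L"
  unfolding fib_like_def
proof
  fix i :: int
  show "L (i + 2) = L (i + 1) + L i"
  proof (cases i rule: int_cases_neg3)
    case 1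
    then obtain m where "i = int m" by (metis nonneg_eq_int)
    then show ?thesis by (simp add: L_def nat_add_distrib)
  next
    case (4 j)
    have "L (i + 2) = (-1) ^ (j + 1) * lucn (Suc j)"
      "L (i + 1) = (-1) ^ j * lucn (Suc (Suc j))"
      "L i = (-1) ^ (j + 1) * lucn (Suc (Suc (Suc j)))"
      by (simp_all add: L_def 4 nat_add_distrib numeral_eq_Suc)
    then show ?thesis by (simp add: algebra_simps)
  qed (simp_all add: L_def numeral_eq_Suc)
qed

lemma F_add_two: "F (i + 2) = F (i + 1) + F i"
  using F_fib_like unfolding fib_like_def by blast

lemma F_0 [simp]: "F 0 = 0" and F_1 [simp]: "F 1 = 1" and F_neg1 [simp]: "F (-1) = 1"
  by (simp_all add: F_def)

lemma L_eq_F: "L n = F (n - 1) + F (n + 1)"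
proof (rule fib_like_eqI[OF L_fib_like])
  show "fib_like (\<lambda>n. F (n - 1) + F (n + 1))"
    unfolding fib_like_def using F_add_two[of "i - 1" for i] F_add_two[of "i + 1" for i]
    by (simp add: algebra_simps)
  show "L 1 = F (1 - 1) + F (1 + 1)"
    using F_add_two[of 0] by (simp add: L_def)
qed (simp add: L_def)

lemma F_add: "F (n + k) = F k * F (n + 1) + F (k - 1) * F n"
proof (rule fib_like_eqI[where g = "\<lambda>n. F (n + k)"])
  show "fib_like (\<lambda>n. F (n + k))"
    unfolding fib_like_def using F_add_two[of "i + k" for i] by (simp add: algebra_simps)
  show "fib_like (\<lambda>n. F k * F (n + 1) + F (k - 1) * F n)"
    unfolding fib_like_def using F_add_two[of "i + 1" for i] F_add_two
    by (simp add: algebra_simps)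
  show "F (1 + k) = F k * F (1 + 1) + F (k - 1) * F 1"
    using F_add_two[of "k - 1"] F_add_two[of 0] by (simp add: algebra_simps)
qed simp

lemma F_cassini_squared: "(F (n + 1)^2 - F (n + 1) * F n - F n ^ 2)^2 = 1"
proof -
  let ?C = "\<lambda>n. (F (n + 1)^2 - F (n + 1) * F n - F n ^ 2)^2"
  have "?C (i + 1) = ?C i" for i
    using F_add_two[of i] by (simp add: algebra_simps power2_eq_square)
  then have "?C n = ?C 0" by (rule shift_invariant_const)
  then show ?thesis by simp
qed

lemma L_pow4_eq_increment:
  defines "R \<equiv> \<lambda>n. 5 * F (2*n+1) * F (n-1) * F (n+2) + 6*n - 5"
  shows "L n ^ 4 = R n - R (n - 1)"
proof -
  define a b where "a = F n" and "b = F (n + 1)"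
  have F_pred: "F (n - 1) = b - a"
    using F_add_two[of "n - 1"] by (simp add: a_def b_def add.commute)
  have F_pred2: "F (n - 2) = 2*a - b"
    using F_add_two[of "n - 2"] F_pred by (simp add: a_def)
  have F_succ2: "F (n + 2) = a + b"
    using F_add_two[of n] by (simp add: a_def b_def)
  have F_double_succ: "F (2*n + 1) = a^2 + b^2"
    using F_add[of n "n + 1"] by (simp add: a_def b_def algebra_simps power2_eq_square)
  have F_double_pred: "F (2*n - 1) = a^2 + (b - a)^2"
    using F_add[of "n - 1" n] F_pred by (simp add: a_def b_def algebra_simps power2_eq_square)
  have "R n - R (n - 1) = 5*F(2*n+1)*F(n-1)*F(n+2) - 5*F(2*n-1)*F(n-2)*F(n+1) + 6"
    by (simp add: R_def algebra_simps)
  also have "\<dots> = 5*(a^2+b^2)*(b-a)*(a+b) - 5*(a^2+(b-a)^2)*(2*a-b)*b + 6"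
    by (simp add: F_pred F_pred2 F_succ2 F_double_succ F_double_pred b_def)
  also have "\<dots> = (2*b - a)^4 + 6 - 6*(b^2 - b*a - a^2)^2"
    by (simp add: algebra_simps power2_eq_square power4_eq_xxxx)
  also have "\<dots> = L n ^ 4"
    using F_cassini_squared[of n] L_eq_F[of n] F_pred by (simp add: a_def b_def)
  finally show ?thesis ..
qed

theorem corollary2:
  fixes n :: int
  shows "gsum (\<lambda>k. L k ^ 4) 1 n = 5 * F (2*n+1) * F (n-1) * F (n+2) + 6*n - 5"
proof -
  let ?R = "\<lambda>n. 5 * F (2*n+1) * F (n-1) * F (n+2) + 6*n - 5"
  let ?D = "\<lambda>n. gsum (\<lambda>k. L k ^ 4) 1 n - ?R n"
  have "?D (i + 1) = ?D i" for i
    using gsum_diff_pred[of "\<lambda>k. L k ^ 4" 1 "i + 1"] L_pow4_eq_increment[of "i + 1"]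
    by simp
  then have "?D n = ?D 0" by (rule shift_invariant_const)
  also have "?D 0 = 0"
    using F_add_two[of 0] by (simp add: gsum_def)
  finally show ?thesis by simp
qed

end
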